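(* Let $r$ be a positive integer and $n\ge0$. Each of the following sets is a basis of $\mathrm{NCQSym}^r_n(\mathbf{x})$: (1) $\{\mathbf{M}_{(\Phi,\Pi)}:(\Phi,\Pi)\text{ an } r\text{-set-composition of }[n]\}$; (2) $\{\overline{\mathbf{F}}_{(\Phi,\Pi)}:(\Phi,\Pi)\text{ an } r\text{-set-composition of }[n]\}$.
   Context: Noncommuting variables $\mathbf{x}_1,\mathbf{x}_2,\dots$. A set composition $\Phi=(\Phi_1|\cdots|\Phi_k)$ of a finite set is an ordered list of disjoint nonempty blocks with that union; a set partition $\Pi=\Pi_1/\cdots/\Pi_l$ an unordered one. An $r$-set-composition of $[n]$ is a pair $(\Phi,\Pi)$ with $\Phi$ a set composition of some $A\subseteq[n]$ with all blocks of size $\ge r$ and $\Pi$ a set partition of $[n]\setminus A$ with all blocks of size $<r$. $\mathbf{M}_{(\Phi,\Pi)}=\sum\mathbf{x}_{i_1}\cdots\mathbf{x}_{i_n}$ over tuples with $i_j=i_k$ iff $j,k$ lie in a common block of $\Phi$ or $\Pi$, and $i_j<i_k$ whenever $j\in\Phi_l,k\in\Phi_m$, $l<m$; $\mathrm{NCQSym}^r_n(\mathbf{x})$ is the $\mathbb{Q}$-span of these $\mathbf{M}_{(\Phi,\Pi)}$. An edge-coloured digraph is a finite simple digraph with each edge of type dashed ($\dashrightarrow$), solid ($\rightarrow$) or double ($\Rightarrow$); a proper vertex-colouring is $\kappa:V\to\mathbb{P}$ with $\kappa(a)\ne\kappa(b)$, $\kappa(a)<\kappa(b)$, $\kappa(a)\le\kappa(b)$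 for dashed, solid, double edges $(a,b)$ respectively. A labelled edge-coloured digraph $(G,L)$ has a bijection $L:V(G)\to[|V(G)|]$ and $\mathscr{Y}_{(G,L)}(\mathbf{x})=\sum_\kappa\mathbf{x}_{\kappa(L^{-1}(1))}\mathbf{x}_{\kappa(L^{-1}(2))}\cdots\mathbf{x}_{\kappa(L^{-1}(|V(G)|))}$ over proper vertex-colourings $\kappa$. For a finite set $A\subseteq\mathbb{P}$, $C_A$ is a directed cycle on $|A|$ vertices with all edges double and vertices labelled bijectively by $A$ (a single vertex with no edges if $|A|=1$). The dashed (resp. double) sum of two labelled edge-coloured digraphs is their disjoint union together with a dashed (resp. double) edge $(a,b)$ for every vertex $a$ of the first and $b$ of the second. Define $\overline{\mathbf{F}}_{(\Phi,\Pi)}=\mathscr{Y}_{(G,L)}(\mathbf{x})$ where $(G,L)$ is the dashed sum of $\big(C_{\Phi_1}$ double-sum $C_{\Phi_2}$ double-sum $\cdots$ double-sum $C_{\Phi_k}\big)$ and $\big(C_{\Pi_1}$ dashed-sum $\cdots$ dashed-sum $C_{\Pi_l}\big)$. *)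

theory Defs
  imports Complex_Main "HOL-Library.Function_Algebras" "HOL-Library.Disjoint_Sets"
begin

text \<open>A noncommutative formal series in x_1, x_2, ... with rational coefficients is a
function from words (lists of positive integers) to rat; the word [i_1,...,i_n] stands
for the monomial x_{i_1} ... x_{i_n}.\<close>

type_synonym ncseries = "nat list \<Rightarrow> rat"

definition qscale :: "rat \<Rightarrow> ncseries \<Rightarrow> ncseries" where
  "qscale c f = (\<lambda>w. c * f w)"

definition basis_family :: "ncseries set \<Rightarrow> 'i set \<Rightarrow> ('i \<Rightarrow> ncseries) \<Rightarrow> bool" where
  "basis_family V I v \<longleftrightarrow>
     inj_on v I \<and> \<not> module.dependent qscale (v ` I) \<and> module.span qscale (v ` I) = V"

definition set_composition :: "nat set \<Rightarrow> nat set list \<Rightarrow> bool" where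
  "set_composition A Ph \<longleftrightarrow>
     (\<forall>B\<in>set Ph. B \<noteq> {}) \<and>
     (\<forall>i<length Ph. \<forall>j<length Ph. i \<noteq> j \<longrightarrow> Ph ! i \<inter> Ph ! j = {}) \<and>
     \<Union>(set Ph) = A"

definition r_set_composition :: "nat \<Rightarrow> nat \<Rightarrow> nat set list \<times> nat set set \<Rightarrow> bool" where
  "r_set_composition r n PP \<longleftrightarrow>
     (case PP of (Ph, Pt) \<Rightarrow>
       (\<exists>A. A \<subseteq> {1..n} \<and> set_composition A Ph \<and> (\<forall>B\<in>set Ph. card B \<ge> r) \<and>
            partition_on ({1..n} - A) Pt \<and> (\<forall>B\<in>Pt. card B < r)))"

definition rsc :: "nat \<Rightarrow> nat \<Rightarrow> (nat set list \<times> nat set set) set" where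
  "rsc r n = {PP. r_set_composition r n PP}"

definition same_block :: "nat set list \<Rightarrow> nat set set \<Rightarrow> nat \<Rightarrow> nat \<Rightarrow> bool" where
  "same_block Ph Pt j k \<longleftrightarrow> (\<exists>B \<in> set Ph \<union> Pt. j \<in> B \<and> k \<in> B)"

text \<open>Coefficient of the word w = [i_1,...,i_n] in M_(Ph,Pt) (position j has letter w!(j-1)).\<close>
definition Mmon :: "nat \<Rightarrow> nat set list \<times> nat set set \<Rightarrow> ncseries" where
  "Mmon n PP = (\<lambda>w. case PP of (Ph, Pt) \<Rightarrow>
     (if length w = n \<and> 0 \<notin> set w \<and>
         (\<forall>j\<in>{1..n}. \<forall>k\<in>{1..n}. (w ! (j-1) = w ! (k-1)) \<longleftrightarrow> same_block Ph Pt j k) \<and>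
         (\<forall>l m j k. l < m \<and> m < length Ph \<and> j \<in> Ph ! l \<and> k \<in> Ph ! m \<longrightarrow>
             w ! (j-1) < w ! (k-1))
      then 1 else 0))"

definition NCQSym :: "nat \<Rightarrow> nat \<Rightarrow> ncseries set" where
  "NCQSym r n = module.span qscale (Mmon n ` rsc r n)"

datatype ecol = Dashed | Solid | Double

text \<open>A labelled edge-coloured digraph whose vertices are identified with their labels:
a finite vertex set V of positive integers and an edge map E (E a b = Some t: an edge
(a,b) of type t).  The labelling is the identity, so in the final graph V = {1..n}.\<close>
type_synonym lecg = "nat set \<times> (nat \<Rightarrow> nat \<Rightarrow> ecol option)"

definition proper_colouring :: "lecg \<Rightarrow> (nat \<Rightarrow> nat) \<Rightarrow> bool" where
  "proper_colouring G kappa \<longleftrightarrow>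
     (case G of (V, E) \<Rightarrow>
       kappa \<in> extensional V \<and> (\<forall>v\<in>V. kappa v \<ge> 1) \<and>
       (\<forall>a\<in>V. \<forall>b\<in>V.
          (E a b = Some Dashed \<longrightarrow> kappa a \<noteq> kappa b) \<and>
          (E a b = Some Solid \<longrightarrow> kappa a < kappa b) \<and>
          (E a b = Some Double \<longrightarrow> kappa a \<le> kappa b)))"

text \<open>Y_(G,L): the coefficient of w is the number of proper colourings kappa with
 w = kappa(L^-1 1) ... kappa(L^-1 |V|); here L^-1 i = i.\<close>
definition Ypoly :: "lecg \<Rightarrow> ncseries" where
  "Ypoly G = (\<lambda>w. of_nat (card {kappa. proper_colouring G kappa \<and>
                     w = map kappa [1..<card (fst G) + 1]}))"

definition empty_graph :: lecg where
  "empty_graph = ({}, (\<lambda>a b. None))"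

definition gsum :: "ecol \<Rightarrow> lecg \<Rightarrow> lecg \<Rightarrow> lecg" where
  "gsum t G H = (case G of (V1, E1) \<Rightarrow> case H of (V2, E2) \<Rightarrow>
     (V1 \<union> V2, (\<lambda>a b. if a \<in> V1 \<and> b \<in> V1 then E1 a b
                      else if a \<in> V2 \<and> b \<in> V2 then E2 a b
                      else if a \<in> V1 \<and> b \<in> V2 then Some t
                      else None)))"

definition gsum_list :: "ecol \<Rightarrow> lecg list \<Rightarrow> lecg" where
  "gsum_list t Gs = foldr (gsum t) Gs empty_graph"

definition cycle_graph :: "nat set \<Rightarrow> lecg" where
  "cycle_graph A = (let xs = sorted_list_of_set A in
     (A, (\<lambda>a b. if card A \<ge> 2 \<and>
                   (\<exists>i<length xs. a = xs ! i \<and> b = xs ! ((i + 1) mod length xs))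
                then Some Double else None)))"

definition enum_blocks :: "nat set set \<Rightarrow> nat set list" where
  "enum_blocks P = (SOME xs. distinct xs \<and> set xs = P)"

definition Fbar_graph :: "nat set list \<times> nat set set \<Rightarrow> lecg" where
  "Fbar_graph PP = (case PP of (Ph, Pt) \<Rightarrow>
     gsum Dashed (gsum_list Double (map cycle_graph Ph))
                 (gsum_list Dashed (map cycle_graph (enum_blocks Pt))))"

definition Fbar :: "nat set list \<times> nat set set \<Rightarrow> ncseries" where
  "Fbar PP = Ypoly (Fbar_graph PP)"

end

theory Submission
  imports Defs
begin

text \<open>
  Every word \<open>w\<close> of length \<open>n\<close> with positive letters has a unique type in \<open>rsc r n\<close>: its
  blocks are the level sets of \<open>w\<close>, those of size at least \<open>r\<close> listed by increasing letter.
  \<open>Mmon n PP\<close> is the indicator function of the words of type \<open>PP\<close>, so the monomials have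
  disjoint nonempty supports and are linearly independent.

  A word \<open>w\<close> is counted by \<open>Fbar QQ\<close> iff \<open>w\<close> is constant on the blocks of \<open>QQ\<close>, weakly
  increasing along its ordered blocks, and takes on each unordered block values that occur
  nowhere else. This only depends on the type of \<open>w\<close>, so \<open>Fbar QQ\<close> is a combination of the
  \<open>Mmon n PP\<close>. If \<open>w\<close> has type \<open>PP \<noteq> QQ\<close> and is counted by \<open>Fbar QQ\<close>, then \<open>PP\<close> has
  as many blocks as \<open>w\<close> has letters, which is strictly fewer than \<open>QQ\<close> has blocks. So the
  transition matrix is unitriangular with respect to the number of blocks, and the \<open>Fbar QQ\<close>
  are independent; having as many elements as the monomial basis, they span the same space.
\<close>

interpretation Q: vector_space qscale
  by unfold_locales (auto simp: qscale_def fun_eq_iff algebra_simps)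

lemma sum_fun_apply: "(\<Sum>a\<in>A. f a) x = (\<Sum>a\<in>A. f a x)"
  by (induction A rule: infinite_finite_induct) auto

lemma (in vector_space) span_eq_if_card_le:
  assumes "finite B" and "independent A" and "A \<subseteq> span B" and "card B \<le> card A"
  shows "span A = span B"
proof
  show "span A \<subseteq> span B"
    using assms(3) by (simp add: span_minimal subspace_span)
  have "B \<subseteq> span A"
  proof
    fix b assume "b \<in> B"
    show "b \<in> span A"
    proof (rule ccontr)
      assume b: "b \<notin> span A"
      have "independent (insert b A)"
        using b assms(2) by (rule independent_insertI)
      moreover have "insert b A \<subseteq> span B"
        using \<open>b \<in> B\<close> assms(3) span_base by blast
      ultimately have "card (insert b A) \<le> card B"
        using independent_span_bound[OF assms(1)] by auto
      moreover have "finite A"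
        using independent_span_bound[OF assms(1-3)] by simp
      moreover have "b \<notin> A"
        using b span_base by blast
      ultimately show False
        using assms(4) by simp
    qed
  qed
  then show "span B \<subseteq> span A"
    by (simp add: span_minimal subspace_span)
qed

lemma independent_if_triangular:
  fixes v :: "'i \<Rightarrow> ncseries"
  assumes "finite I"
    and diag: "\<And>i. i \<in> I \<Longrightarrow> v i (p i) \<noteq> 0"
    and below: "\<And>i j. i \<in> I \<Longrightarrow> j \<in> I \<Longrightarrow> v j (p i) \<noteq> 0 \<Longrightarrow> j \<noteq> i \<Longrightarrow> h i < (h j :: nat)"
  shows "inj_on v I" and "Q.independent (v ` I)"
proof -
  show inj: "inj_on v I"
  proof (rule inj_onI, rule ccontr)
    fix i j assume "i \<in> I" "j \<in> I" "v i = v j" "i \<noteq> j"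
    then have "h i < h j" and "h j < h i"
      using diag below by metis+
    then show False by simp
  qed
  show "Q.independent (v ` I)"
  proof (rule Q.independent_if_scalars_zero)
    show "finite (v ` I)"
      using assms(1) by simp
    fix c x assume zero: "(\<Sum>y\<in>v ` I. qscale (c y) y) = 0" and "x \<in> v ` I"
    show "c x = 0"
    proof (rule ccontr)
      assume "c x \<noteq> 0"
      define S where "S = {i \<in> I. c (v i) \<noteq> 0}"
      have "finite S" "S \<noteq> {}"
        using assms(1) \<open>x \<in> v ` I\<close> \<open>c x \<noteq> 0\<close> by (auto simp: S_def)
      then have "Max (h ` S) \<in> h ` S"
        by simp
      then obtain i where i: "i \<in> S" and "h i = Max (h ` S)"
        by auto
      then have max: "h j \<le> h i" if "j \<in> S" for j
        using that \<open>finite S\<close> by simp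
      have "(\<Sum>y\<in>v ` I. c y * y (p i)) = (\<Sum>j\<in>I. c (v j) * v j (p i))"
        using sum.reindex[OF inj, of "\<lambda>y. c y * y (p i)"] by simp
      also have "\<dots> = c (v i) * v i (p i) + (\<Sum>j\<in>I - {i}. c (v j) * v j (p i))"
        using i assms(1) by (auto simp: S_def intro: sum.remove)
      also have "(\<Sum>j\<in>I - {i}. c (v j) * v j (p i)) = 0"
        using below max i by (intro sum.neutral) (fastforce simp: S_def)
      finally have "c (v i) * v i (p i) = 0"
        using fun_cong[OF zero, of "p i"] by (simp add: sum_fun_apply qscale_def)
      then show False
        using i diag by (simp add: S_def)
    qed
  qed
qed

lemma sorted_wrt_iff_pairwise:
  "symp R \<Longrightarrow> distinct xs \<Longrightarrow> sorted_wrt R xs \<longleftrightarrow> pairwise R (set xs)"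
  by (induction xs) (auto simp: pairwise_insert dest: sympD)

lemma sorted_wrt_pointwise_iff:
  "sorted_wrt (\<lambda>A B. \<forall>a\<in>A. \<forall>b\<in>B. P a b) xs \<longleftrightarrow>
    (\<forall>l m a b. l < m \<and> m < length xs \<and> a \<in> xs ! l \<and> b \<in> xs ! m \<longrightarrow> P a b)"
  unfolding sorted_wrt_iff_nth_less by blast

lemma sorted_wrt_key_unique:
  fixes f :: "'a \<Rightarrow> 'b :: linorder"
  assumes xs: "sorted_wrt (\<lambda>x y. f x < f y) xs" and ys: "sorted_wrt (\<lambda>x y. f x < f y) ys"
    and "set xs = set ys"
  shows "xs = ys"
proof -
  have "map f xs = map f ys"
    using xs ys \<open>set xs = set ys\<close> by (intro strict_sorted_equal) (simp_all add: sorted_wrt_map)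
  moreover have "inj_on f (set xs)"
  proof (rule inj_onI)
    fix x y assume "x \<in> set xs" "y \<in> set xs" "f x = f y"
    then obtain i j where "i < length xs" "xs ! i = x" "j < length xs" "xs ! j = y"
      by (meson in_set_conv_nth)
    then show "x = y"
      using xs \<open>f x = f y\<close> unfolding sorted_wrt_iff_nth_less
      by (metis less_irrefl linorder_neqE_nat)
  qed
  ultimately show ?thesis
    using inj_on_map_eq_map[of f xs ys] \<open>set xs = set ys\<close> by simp
qed

lemma partition_on_part_eq:
  "partition_on A P \<Longrightarrow> B \<in> P \<Longrightarrow> B' \<in> P \<Longrightarrow> x \<in> B \<Longrightarrow> x \<in> B' \<Longrightarrow> B = B'"
  using partition_onD2 disjointD by blast

lemma partition_on_filter:
  assumes "partition_on X P"
  shows "partition_on (X - \<Union>{B \<in> P. Q B}) {B \<in> P. \<not> Q B}"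
proof (rule partition_onI)
  show "\<Union>{B \<in> P. \<not> Q B} = X - \<Union>{B \<in> P. Q B}"
  proof
    show "\<Union>{B \<in> P. \<not> Q B} \<subseteq> X - \<Union>{B \<in> P. Q B}"
      using partition_onD1[OF assms] partition_on_part_eq[OF assms] by blast
    show "X - \<Union>{B \<in> P. Q B} \<subseteq> \<Union>{B \<in> P. \<not> Q B}"
      using partition_onD1[OF assms] by blast
  qed
  show "disjnt B B'" if "B \<in> {B \<in> P. \<not> Q B}" "B' \<in> {B \<in> P. \<not> Q B}" "B \<noteq> B'" for B B'
    using that partition_onD2[OF assms] by (auto simp: pairwise_def)
  show "{} \<notin> {B \<in> P. \<not> Q B}"
    using partition_onD3[OF assms] by blast
qed

lemma Least_index_eq:
  assumes "distinct Bs" and "disjoint (set Bs)" and "i < length Bs" and "x \<in> Bs ! i"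
  shows "(LEAST i. x \<in> Bs ! i) = i"
proof (rule Least_equality)
  fix m assume m: "x \<in> Bs ! m"
  show "i \<le> m"
  proof (rule ccontr)
    assume "\<not> i \<le> m"
    then have "m < length Bs" and "Bs ! m \<noteq> Bs ! i"
      using assms(1,3) by (auto simp: nth_eq_iff_index_eq)
    then show False
      using disjointD[OF assms(2)] assms(3,4) m by (metis disjoint_iff nth_mem)
  qed
qed (rule assms(4))

lemma extensional_eq_restrict_iff:
  "\<kappa> \<in> extensional A \<and> (\<forall>x\<in>A. \<kappa> x = f x) \<longleftrightarrow> \<kappa> = restrict f A"
proof
  assume "\<kappa> \<in> extensional A \<and> (\<forall>x\<in>A. \<kappa> x = f x)"
  then show "\<kappa> = restrict f A"
    by (intro extensionalityI[OF _ restrict_extensional]) auto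
next
  assume "\<kappa> = restrict f A"
  then show "\<kappa> \<in> extensional A \<and> (\<forall>x\<in>A. \<kappa> x = f x)"
    by simp
qed

section \<open>Words and their level sets\<close>

abbreviation letter :: "nat list \<Rightarrow> nat \<Rightarrow> nat" where
  "letter w j \<equiv> w ! (j - 1)"

lemma eq_map_upt_iff:
  "w = map \<kappa> [1..<Suc n] \<longleftrightarrow> length w = n \<and> (\<forall>j\<in>{1..n}. \<kappa> j = letter w j)"
proof
  assume w: "w = map \<kappa> [1..<Suc n]"
  have "letter w j = \<kappa> j" if "j \<in> {1..n}" for j
  proof -
    have "j - 1 < n" and "1 + (j - 1) = j"
      using that by auto
    then show ?thesis
      unfolding w by (simp only: nth_map length_upt nth_upt)
  qed
  then show "length w = n \<and> (\<forall>j\<in>{1..n}. \<kappa> j = letter w j)"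
    using w by simp
next
  assume w: "length w = n \<and> (\<forall>j\<in>{1..n}. \<kappa> j = letter w j)"
  show "w = map \<kappa> [1..<Suc n]"
  proof (rule nth_equalityI)
    fix i assume "i < length w"
    then have "Suc i \<in> {1..n}"
      using w by simp
    then show "w ! i = map \<kappa> [1..<Suc n] ! i"
      using w \<open>i < length w\<close> by (simp del: upt_Suc)
  qed (use w in simp)
qed

lemma zero_notin_set_iff:
  assumes "length w = n"
  shows "0 \<notin> set w \<longleftrightarrow> (\<forall>j\<in>{1..n}. 1 \<le> letter w j)"
proof -
  have "0 \<in> set w \<longleftrightarrow> (\<exists>j\<in>{1..n}. letter w j = 0)"
  proof
    assume "0 \<in> set w"
    then obtain i where "i < n" "w ! i = 0"
      using assms by (auto simp: in_set_conv_nth)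
    then show "\<exists>j\<in>{1..n}. letter w j = 0"
      by (intro bexI[of _ "Suc i"]) auto
  next
    assume "\<exists>j\<in>{1..n}. letter w j = 0"
    then obtain j where "j \<in> {1..n}" "letter w j = 0"
      by blast
    moreover have "j - 1 < length w"
      using assms \<open>j \<in> {1..n}\<close> by auto
    ultimately show "0 \<in> set w"
      by (metis nth_mem)
  qed
  then show ?thesis
    by (auto simp: Suc_le_eq)
qed

lemma letter_in_set:
  assumes "j \<in> {1..length w}"
  shows "letter w j \<in> set w"
proof -
  have "j - 1 < length w"
    using assms by auto
  then show ?thesis
    by (rule nth_mem)
qed

lemma in_set_conv_letter: "v \<in> set w \<longleftrightarrow> (\<exists>j\<in>{1..length w}. letter w j = v)"
proof
  assume "v \<in> set w"
  then obtain i where "i < length w" "w ! i = v"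
    by (auto simp: in_set_conv_nth)
  then show "\<exists>j\<in>{1..length w}. letter w j = v"
    by (intro bexI[of _ "Suc i"]) auto
qed (use letter_in_set in blast)

definition level :: "nat list \<Rightarrow> nat \<Rightarrow> nat set" where
  "level w v = {j \<in> {1..length w}. letter w j = v}"

lemma level_nonempty:
  assumes "v \<in> set w"
  shows "level w v \<noteq> {}"
proof -
  obtain i where "i < length w" "w ! i = v"
    using assms by (auto simp: in_set_conv_nth)
  then have "Suc i \<in> level w v"
    by (simp add: level_def)
  then show ?thesis
    by blast
qed

lemma inj_on_level: "inj_on (level w) (set w)"
proof (rule inj_onI)
  fix v v' assume "v \<in> set w" "level w v = level w v'"
  then obtain j where "j \<in> level w v" "j \<in> level w v'"
    using level_nonempty by blast
  then show "v = v'"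
    by (simp add: level_def)
qed

lemma partition_levels: "partition_on {1..length w} (level w ` set w)"
proof (rule partition_onI)
  show "\<Union>(level w ` set w) = {1..length w}"
  proof
    show "{1..length w} \<subseteq> \<Union>(level w ` set w)"
    proof
      fix j assume "j \<in> {1..length w}"
      then have "j \<in> level w (letter w j)" and "letter w j \<in> set w"
        by (simp add: level_def, rule letter_in_set)
      then show "j \<in> \<Union>(level w ` set w)"
        by blast
    qed
  qed (auto simp: level_def)
  show "disjnt B B'" if "B \<in> level w ` set w" "B' \<in> level w ` set w" "B \<noteq> B'" for B B'
    using that by (auto simp: disjnt_def level_def)
  show "{} \<notin> level w ` set w"
    using level_nonempty by blast
qed

lemma same_level_iff:
  assumes "j \<in> {1..length w}" and "k \<in> {1..length w}"
  shows "letter w j = letter w k \<longleftrightarrow> (\<exists>B\<in>level w ` set w. j \<in> B \<and> k \<in> B)"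
proof
  assume "letter w j = letter w k"
  then have "j \<in> level w (letter w j)" and "k \<in> level w (letter w j)"
    using assms by (simp_all add: level_def)
  then show "\<exists>B\<in>level w ` set w. j \<in> B \<and> k \<in> B"
    using letter_in_set[OF assms(1)] by blast
qed (auto simp: level_def)

section \<open>Proper colourings of edge-coloured digraphs\<close>

fun colour_rel :: "ecol \<Rightarrow> nat \<Rightarrow> nat \<Rightarrow> bool" where
  "colour_rel Dashed x y \<longleftrightarrow> x \<noteq> y"
| "colour_rel Solid x y \<longleftrightarrow> x < y"
| "colour_rel Double x y \<longleftrightarrow> x \<le> y"

definition satisfies_edges :: "lecg \<Rightarrow> (nat \<Rightarrow> nat) \<Rightarrow> bool" where
  "satisfies_edges G \<kappa> \<longleftrightarrow>
     (\<forall>a\<in>fst G. \<forall>b\<in>fst G. \<forall>t. snd G a b = Some t \<longrightarrow> colour_rel t (\<kappa> a) (\<kappa> b))"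

lemma all_ecol: "(\<forall>t. P t) \<longleftrightarrow> P Dashed \<and> P Solid \<and> P Double"
  by (metis ecol.exhaust)

lemma proper_colouring_iff:
  "proper_colouring G \<kappa> \<longleftrightarrow>
     \<kappa> \<in> extensional (fst G) \<and> (\<forall>v\<in>fst G. 1 \<le> \<kappa> v) \<and> satisfies_edges G \<kappa>"
  by (cases G) (simp add: proper_colouring_def satisfies_edges_def all_ecol)

lemma satisfies_edges_cong:
  "(\<And>v. v \<in> fst G \<Longrightarrow> \<kappa> v = \<kappa>' v) \<Longrightarrow> satisfies_edges G \<kappa> \<longleftrightarrow> satisfies_edges G \<kappa>'"
  by (simp add: satisfies_edges_def)

lemma Ypoly_eq:
  assumes V: "fst G = {1..n}"
  shows "Ypoly G w =
    (if length w = n \<and> 0 \<notin> set w \<and> satisfies_edges G (letter w) then 1 else 0)"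
proof -
  let ?c = "length w = n \<and> 0 \<notin> set w \<and> satisfies_edges G (letter w)"
  have "proper_colouring G \<kappa> \<and> w = map \<kappa> [1..<Suc n] \<longleftrightarrow>
      ?c \<and> \<kappa> = restrict (letter w) {1..n}" for \<kappa>
  proof -
    have "proper_colouring G \<kappa> \<and> w = map \<kappa> [1..<Suc n] \<longleftrightarrow>
        \<kappa> \<in> extensional {1..n} \<and> (\<forall>j\<in>{1..n}. \<kappa> j = letter w j) \<and> length w = n \<and>
        (\<forall>v\<in>{1..n}. 1 \<le> \<kappa> v) \<and> satisfies_edges G \<kappa>"
      unfolding proper_colouring_iff eq_map_upt_iff V by blast
    also have "\<dots> \<longleftrightarrow> \<kappa> = restrict (letter w) {1..n} \<and> length w = n \<and>
        (\<forall>v\<in>{1..n}. 1 \<le> letter w v) \<and> satisfies_edges G (letter w)"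
      using satisfies_edges_cong[of G \<kappa> "letter w"] V
      by (auto simp: extensional_eq_restrict_iff[symmetric])
    finally show ?thesis
      using zero_notin_set_iff by blast
  qed
  then have "card {\<kappa>. proper_colouring G \<kappa> \<and> w = map \<kappa> [1..<Suc n]} =
      card {\<kappa>. ?c \<and> \<kappa> = restrict (letter w) {1..n}}"
    by (simp only:)
  also have "\<dots> = (if ?c then 1 else 0)"
    by (cases ?c) simp_all
  finally show ?thesis
    using V by (simp add: Ypoly_def del: upt_Suc)
qed

lemma fst_gsum [simp]: "fst (gsum t G H) = fst G \<union> fst H"
  by (cases G; cases H) (simp add: gsum_def)

lemma snd_gsum:
  "snd (gsum t G H) a b =
    (if a \<in> fst G \<and> b \<in> fst G then snd G a b
     else if a \<in> fst H \<and> b \<in> fst H then snd H a b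
     else if a \<in> fst G \<and> b \<in> fst H then Some t else None)"
  by (cases G; cases H) (simp add: gsum_def)

lemma satisfies_edges_gsum:
  assumes "disjnt (fst G) (fst H)"
  shows "satisfies_edges (gsum t G H) \<kappa> \<longleftrightarrow>
    satisfies_edges G \<kappa> \<and> satisfies_edges H \<kappa> \<and>
    (\<forall>a\<in>fst G. \<forall>b\<in>fst H. colour_rel t (\<kappa> a) (\<kappa> b))"
proof -
  have "snd (gsum t G H) a b = snd G a b" if "a \<in> fst G" "b \<in> fst G" for a b
    using that by (simp add: snd_gsum)
  moreover have "snd (gsum t G H) a b = snd H a b" if "a \<in> fst H" "b \<in> fst H" for a b
    using that assms by (auto simp: snd_gsum disjnt_iff)
  moreover have "snd (gsum t G H) a b = Some t" if "a \<in> fst G" "b \<in> fst H" for a b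
    using that assms by (auto simp: snd_gsum disjnt_iff)
  moreover have "snd (gsum t G H) a b = None" if "a \<in> fst H" "b \<in> fst G" for a b
    using that assms by (auto simp: snd_gsum disjnt_iff)
  ultimately show ?thesis
    unfolding satisfies_edges_def fst_gsum ball_Un by (simp; blast)
qed

lemma fst_gsum_list [simp]: "fst (gsum_list t Gs) = \<Union>(fst ` set Gs)"
  by (induction Gs) (auto simp: gsum_list_def empty_graph_def)

lemma satisfies_edges_gsum_list:
  assumes "sorted_wrt (\<lambda>G H. disjnt (fst G) (fst H)) Gs"
  shows "satisfies_edges (gsum_list t Gs) \<kappa> \<longleftrightarrow>
    (\<forall>G\<in>set Gs. satisfies_edges G \<kappa>) \<and>
    sorted_wrt (\<lambda>G H. \<forall>a\<in>fst G. \<forall>b\<in>fst H. colour_rel t (\<kappa> a) (\<kappa> b)) Gs"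
  using assms
proof (induction Gs)
  case Nil
  show ?case
    by (simp add: gsum_list_def empty_graph_def satisfies_edges_def)
next
  case (Cons G Gs)
  have IH: "satisfies_edges (gsum_list t Gs) \<kappa> \<longleftrightarrow>
      (\<forall>G\<in>set Gs. satisfies_edges G \<kappa>) \<and>
      sorted_wrt (\<lambda>G H. \<forall>a\<in>fst G. \<forall>b\<in>fst H. colour_rel t (\<kappa> a) (\<kappa> b)) Gs"
    using Cons.IH Cons.prems by simp
  have "disjnt (fst G) (fst (gsum_list t Gs))"
    using Cons.prems by (auto simp: disjnt_def)
  then have "satisfies_edges (gsum_list t (G # Gs)) \<kappa> \<longleftrightarrow>
      satisfies_edges G \<kappa> \<and> satisfies_edges (gsum_list t Gs) \<kappa> \<and>
      (\<forall>a\<in>fst G. \<forall>b\<in>fst (gsum_list t Gs). colour_rel t (\<kappa> a) (\<kappa> b))"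
    unfolding gsum_list_def foldr.simps o_apply by (rule satisfies_edges_gsum)
  moreover have "(\<forall>a\<in>fst G. \<forall>b\<in>fst (gsum_list t Gs). colour_rel t (\<kappa> a) (\<kappa> b)) \<longleftrightarrow>
      (\<forall>H\<in>set Gs. \<forall>a\<in>fst G. \<forall>b\<in>fst H. colour_rel t (\<kappa> a) (\<kappa> b))"
    by auto
  ultimately show ?case
    unfolding IH sorted_wrt.simps(2) list.set(2) ball_simps(7) by blast
qed

lemma fst_cycle_graph [simp]: "fst (cycle_graph B) = B"
  by (simp add: cycle_graph_def Let_def)

lemma satisfies_edges_cycle_graph:
  assumes "finite B"
  shows "satisfies_edges (cycle_graph B) \<kappa> \<longleftrightarrow> (\<forall>a\<in>B. \<forall>b\<in>B. \<kappa> a = \<kappa> b)"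
proof
  assume const: "\<forall>a\<in>B. \<forall>b\<in>B. \<kappa> a = \<kappa> b"
  have "snd (cycle_graph B) a b = None \<or> snd (cycle_graph B) a b = Some Double" for a b
    by (simp add: cycle_graph_def Let_def)
  then show "satisfies_edges (cycle_graph B) \<kappa>"
    using const unfolding satisfies_edges_def fst_cycle_graph by (metis colour_rel.simps(3) order_refl option.distinct(1) option.inject)
next
  assume edges: "satisfies_edges (cycle_graph B) \<kappa>"
  show "\<forall>a\<in>B. \<forall>b\<in>B. \<kappa> a = \<kappa> b"
  proof (cases "card B \<ge> 2")
    case False
    then have "card B \<le> Suc 0"
      by simp
    then have "a = b" if "a \<in> B" "b \<in> B" for a b
      using card_le_Suc0_iff_eq[OF assms] that by blast
    then show ?thesis
      by blast
  next
    case True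
    define xs where "xs = sorted_list_of_set B"
    define L where "L = length xs"
    have xs: "set xs = B" "L = card B"
      using assms by (simp_all add: xs_def L_def)
    have edge: "\<kappa> (xs ! i) \<le> \<kappa> (xs ! ((i + 1) mod L))" if "i < L" for i
    proof -
      have "\<exists>i'<length xs. xs ! i = xs ! i' \<and> xs ! ((i + 1) mod L) = xs ! ((i' + 1) mod length xs)"
        using that unfolding L_def by blast
      then have "snd (cycle_graph B) (xs ! i) (xs ! ((i + 1) mod L)) = Some Double"
        using True unfolding cycle_graph_def Let_def xs_def[symmetric] by simp
      moreover have "xs ! i \<in> B" "xs ! ((i + 1) mod L) \<in> B"
        using that xs unfolding L_def by (metis nth_mem, metis nth_mem mod_less_divisor zero_less_iff_neq_zero
            not_less_zero)
      ultimately have "colour_rel Double (\<kappa> (xs ! i)) (\<kappa> (xs ! ((i + 1) mod L)))"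
        using edges unfolding satisfies_edges_def fst_cycle_graph by blast
      then show ?thesis
        by simp
    qed
    have mono: "\<kappa> (xs ! i) \<le> \<kappa> (xs ! j)" if "i \<le> j" "j < L" for i j
      using that
    proof (induction j rule: dec_induct)
      case (step m)
      then have "\<kappa> (xs ! i) \<le> \<kappa> (xs ! m)"
        by simp
      also have "\<kappa> (xs ! m) \<le> \<kappa> (xs ! Suc m)"
        using edge[of m] \<open>Suc m < L\<close> by simp
      finally show ?case .
    qed simp
    have "2 \<le> L"
      using True xs by simp
    then have wrap: "\<kappa> (xs ! (L - 1)) \<le> \<kappa> (xs ! 0)"
      using edge[of "L - 1"] by simp
    have const: "\<kappa> (xs ! i) = \<kappa> (xs ! 0)" if "i < L" for i
    proof (rule antisym)
      have "\<kappa> (xs ! i) \<le> \<kappa> (xs ! (L - 1))"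
        by (rule mono) (use that \<open>2 \<le> L\<close> in auto)
      then show "\<kappa> (xs ! i) \<le> \<kappa> (xs ! 0)"
        using wrap by simp
      show "\<kappa> (xs ! 0) \<le> \<kappa> (xs ! i)"
        using mono[of 0 i] that by simp
    qed
    show ?thesis
    proof (intro ballI)
      fix a b assume "a \<in> B" "b \<in> B"
      then have "a \<in> set xs" "b \<in> set xs"
        using xs(1) by simp_all
      then obtain i j where "i < L" "xs ! i = a" "j < L" "xs ! j = b"
        unfolding L_def by (meson in_set_conv_nth)
      then show "\<kappa> a = \<kappa> b"
        using const[of i] const[of j] by simp
    qed
  qed
qed

section \<open>r-set-compositions\<close>

lemma rscD:
  assumes "(Ph, Pt) \<in> rsc r n"
  shows rsc_partition: "partition_on {1..n} (set Ph \<union> Pt)"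
    and rsc_distinct: "distinct Ph"
    and rsc_card_ge: "B \<in> set Ph \<Longrightarrow> r \<le> card B"
    and rsc_card_less: "B \<in> Pt \<Longrightarrow> card B < r"
proof -
  obtain A where A: "A \<subseteq> {1..n}" "set_composition A Ph" "\<forall>B\<in>set Ph. r \<le> card B"
      "partition_on ({1..n} - A) Pt" "\<forall>B\<in>Pt. card B < r"
    using assms unfolding rsc_def r_set_composition_def by auto
  have ne: "\<forall>B\<in>set Ph. B \<noteq> {}" and U: "\<Union>(set Ph) = A"
    and disj: "\<forall>i<length Ph. \<forall>j<length Ph. i \<noteq> j \<longrightarrow> Ph ! i \<inter> Ph ! j = {}"
    using A(2) unfolding set_composition_def by auto
  show "distinct Ph"
    unfolding distinct_conv_nth using ne disj by (metis inf.idem nth_mem)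
  have "disjoint (set Ph)"
  proof (rule disjointI)
    fix B B' assume "B \<in> set Ph" "B' \<in> set Ph" "B \<noteq> B'"
    then obtain i j where "i < length Ph" "j < length Ph" "Ph ! i = B" "Ph ! j = B'"
      by (meson in_set_conv_nth)
    then show "B \<inter> B' = {}"
      using disj \<open>B \<noteq> B'\<close> by blast
  qed
  moreover have "\<Union>(set Ph) \<inter> \<Union>Pt = {}" and "\<Union>(set Ph) \<union> \<Union>Pt = {1..n}"
    using A(1) U partition_onD1[OF A(4)] by auto
  ultimately show "partition_on {1..n} (set Ph \<union> Pt)"
    using ne partition_onD2[OF A(4)] partition_onD3[OF A(4)]
    by (auto simp: partition_on_def intro: disjoint_union)
  show "B \<in> set Ph \<Longrightarrow> r \<le> card B" and "B \<in> Pt \<Longrightarrow> card B < r"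
    using A(3,5) by auto
qed

lemma rsc_block_subset:
  "(Ph, Pt) \<in> rsc r n \<Longrightarrow> B \<in> set Ph \<union> Pt \<Longrightarrow> B \<subseteq> {1..n}"
  using rsc_partition partition_onD1 by blast

lemma rsc_finite: "finite (rsc r n)"
proof (rule finite_subset)
  show "rsc r n \<subseteq> {Ph. set Ph \<subseteq> Pow {1..n} \<and> distinct Ph} \<times> Pow (Pow {1..n})"
  proof
    fix PP assume "PP \<in> rsc r n"
    then obtain Ph Pt where P: "PP = (Ph, Pt)" "(Ph, Pt) \<in> rsc r n"
      by (cases PP) auto
    then show "PP \<in> {Ph. set Ph \<subseteq> Pow {1..n} \<and> distinct Ph} \<times> Pow (Pow {1..n})"
      using rsc_block_subset[OF P(2)] rsc_distinct[OF P(2)] by auto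
  qed
  show "finite ({Ph. set Ph \<subseteq> Pow {1..n} \<and> distinct Ph} \<times> Pow (Pow {1..n}))"
    using finite_subset_distinct[of "Pow {1..n}"] by simp
qed

lemma rsc_block_finite:
  "(Ph, Pt) \<in> rsc r n \<Longrightarrow> B \<in> set Ph \<union> Pt \<Longrightarrow> finite B"
  by (rule finite_subset[OF rsc_block_subset]) simp_all

lemma rsc_block_nonempty:
  "(Ph, Pt) \<in> rsc r n \<Longrightarrow> B \<in> set Ph \<union> Pt \<Longrightarrow> B \<noteq> {}"
  by (metis partition_onD3 rsc_partition)

lemma rsc_cover:
  assumes "(Ph, Pt) \<in> rsc r n" and "j \<in> {1..n}"
  shows "\<exists>B\<in>set Ph \<union> Pt. j \<in> B"
proof -
  from assms(2) have "j \<in> \<Union>(set Ph \<union> Pt)"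
    unfolding partition_onD1[OF rsc_partition[OF assms(1)]] .
  then show ?thesis
    by (rule UnionE) blast
qed

lemma rsc_same_block_iff:
  assumes P: "(Ph, Pt) \<in> rsc r n" and B: "B \<in> set Ph \<union> Pt" and B': "B' \<in> set Ph \<union> Pt"
    and "a \<in> B" and "b \<in> B'"
  shows "same_block Ph Pt a b \<longleftrightarrow> B = B'"
proof
  assume "same_block Ph Pt a b"
  then obtain C where C: "C \<in> set Ph \<union> Pt" "a \<in> C" "b \<in> C"
    unfolding same_block_def by blast
  have "C = B" and "C = B'"
    using partition_on_part_eq[OF rsc_partition[OF P]] C B B' \<open>a \<in> B\<close> \<open>b \<in> B'\<close> by metis+
  then show "B = B'"
    by simp
next
  assume "B = B'"
  then show "same_block Ph Pt a b"
    using B \<open>a \<in> B\<close> \<open>b \<in> B'\<close> unfolding same_block_def by blast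
qed

lemma rsc_disjoint_parts:
  assumes "(Ph, Pt) \<in> rsc r n"
  shows "set Ph \<inter> Pt = {}"
proof (rule equals0I)
  fix B assume "B \<in> set Ph \<inter> Pt"
  then have "r \<le> card B" and "card B < r"
    using rsc_card_ge[OF assms] rsc_card_less[OF assms] by auto
  then show False
    by simp
qed

lemma rsc_blocks_split:
  assumes "(Ph, Pt) \<in> rsc r n"
  shows "set Ph = {B \<in> set Ph \<union> Pt. r \<le> card B}" and "Pt = {B \<in> set Ph \<union> Pt. card B < r}"
  using rsc_card_ge[OF assms] rsc_card_less[OF assms] by force+

lemma rsc_sorted_disjnt:
  assumes "(Ph, Pt) \<in> rsc r n"
  shows "sorted_wrt disjnt Ph"
proof -
  have "pairwise disjnt (set Ph)"
    using partition_onD2[OF rsc_partition[OF assms]] by (rule pairwise_subset) simp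
  moreover have "symp disjnt"
    by (simp add: symp_def disjnt_sym)
  ultimately show ?thesis
    using sorted_wrt_iff_pairwise rsc_distinct[OF assms] by blast
qed

lemma rsc_Union_disjnt:
  assumes "(Ph, Pt) \<in> rsc r n"
  shows "disjnt (\<Union>(set Ph)) (\<Union>Pt)"
unfolding disjnt_iff
proof (intro allI notI)
  fix x assume "x \<in> \<Union>(set Ph) \<and> x \<in> \<Union>Pt"
  then obtain B B' where B: "B \<in> set Ph" "x \<in> B" and B': "B' \<in> Pt" "x \<in> B'"
    by blast
  then have "B = B'"
    using partition_on_part_eq[OF rsc_partition[OF assms]] by blast
  then show False
    using rsc_card_ge[OF assms B(1)] rsc_card_less[OF assms B'(1)] by simp
qed

fun blocks :: "nat set list \<times> nat set set \<Rightarrow> nat set set" where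
  "blocks (Ph, Pt) = set Ph \<union> Pt"

section \<open>The colourings counted by Fbar\<close>

fun admissible_colouring :: "nat set list \<times> nat set set \<Rightarrow> (nat \<Rightarrow> nat) \<Rightarrow> bool" where
  "admissible_colouring (Ph, Pt) \<kappa> \<longleftrightarrow>
     (\<forall>B\<in>set Ph \<union> Pt. \<forall>a\<in>B. \<forall>b\<in>B. \<kappa> a = \<kappa> b) \<and>
     sorted_wrt (\<lambda>A B. \<forall>a\<in>A. \<forall>b\<in>B. \<kappa> a \<le> \<kappa> b) Ph \<and>
     pairwise (\<lambda>A B. \<forall>a\<in>A. \<forall>b\<in>B. \<kappa> a \<noteq> \<kappa> b) Pt \<and>
     (\<forall>a\<in>\<Union>(set Ph). \<forall>b\<in>\<Union>Pt. \<kappa> a \<noteq> \<kappa> b)"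

lemma enum_blocks:
  assumes "finite P"
  shows "distinct (enum_blocks P) \<and> set (enum_blocks P) = P"
proof -
  obtain xs where "distinct xs \<and> set xs = P"
    using finite_distinct_list[OF assms] by blast
  then show ?thesis
    unfolding enum_blocks_def by (rule someI)
qed

lemma Fbar_graph_rsc:
  assumes P: "(Ph, Pt) \<in> rsc r n"
  shows fst_Fbar_graph: "fst (Fbar_graph (Ph, Pt)) = {1..n}"
    and satisfies_edges_Fbar_graph:
      "satisfies_edges (Fbar_graph (Ph, Pt)) \<kappa> \<longleftrightarrow> admissible_colouring (Ph, Pt) \<kappa>"
proof -
  have "finite (set Ph \<union> Pt)"
    using finite_elements[OF _ rsc_partition[OF P]] by simp
  then obtain Pl where Pl: "enum_blocks Pt = Pl" "distinct Pl" "set Pl = Pt"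
    using enum_blocks[of Pt] by auto
  let ?G1 = "gsum_list Double (map cycle_graph Ph)"
  let ?G2 = "gsum_list Dashed (map cycle_graph Pl)"
  have graph: "Fbar_graph (Ph, Pt) = gsum Dashed ?G1 ?G2"
    by (simp add: Fbar_graph_def Pl(1))
  have V1: "fst ?G1 = \<Union>(set Ph)" and V2: "fst ?G2 = \<Union>Pt"
    by (simp_all add: image_image Pl(3))
  show "fst (Fbar_graph (Ph, Pt)) = {1..n}"
    using partition_onD1[OF rsc_partition[OF P]] by (simp add: graph Pl(3))
  have cycles: "(\<forall>B\<in>S. satisfies_edges (cycle_graph B) \<kappa>) \<longleftrightarrow> (\<forall>B\<in>S. \<forall>a\<in>B. \<forall>b\<in>B. \<kappa> a = \<kappa> b)"
    if "S \<subseteq> set Ph \<union> Pt" for S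
  proof (rule ball_cong[OF refl])
    fix B assume "B \<in> S"
    then show "satisfies_edges (cycle_graph B) \<kappa> \<longleftrightarrow> (\<forall>a\<in>B. \<forall>b\<in>B. \<kappa> a = \<kappa> b)"
      using that by (intro satisfies_edges_cycle_graph rsc_block_finite[OF P]) auto
  qed
  have "sorted_wrt (\<lambda>G H. disjnt (fst G) (fst H)) (map cycle_graph Ph)"
    using rsc_sorted_disjnt[OF P] by (simp add: sorted_wrt_map)
  then have G1: "satisfies_edges ?G1 \<kappa> \<longleftrightarrow>
      (\<forall>B\<in>set Ph. \<forall>a\<in>B. \<forall>b\<in>B. \<kappa> a = \<kappa> b) \<and> sorted_wrt (\<lambda>A B. \<forall>a\<in>A. \<forall>b\<in>B. \<kappa> a \<le> \<kappa> b) Ph"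
    using cycles[of "set Ph"] by (simp add: satisfies_edges_gsum_list sorted_wrt_map)
  have "pairwise disjnt Pt"
    using partition_onD2[OF rsc_partition[OF P]] by (rule pairwise_subset) simp
  then have "sorted_wrt disjnt Pl"
    using sorted_wrt_iff_pairwise[of disjnt, OF _ Pl(2)] Pl(3) by (simp add: symp_def disjnt_sym)
  then have Pl_disjnt: "sorted_wrt (\<lambda>G H. disjnt (fst G) (fst H)) (map cycle_graph Pl)"
    by (simp add: sorted_wrt_map)
  have "symp (\<lambda>A B. \<forall>a\<in>A. \<forall>b\<in>B. \<kappa> a \<noteq> \<kappa> b)"
    unfolding symp_def by fastforce
  from sorted_wrt_iff_pairwise[OF this Pl(2)]
  have Pl_distinct_colours: "sorted_wrt (\<lambda>A B. \<forall>a\<in>A. \<forall>b\<in>B. \<kappa> a \<noteq> \<kappa> b) Pl \<longleftrightarrow>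
      pairwise (\<lambda>A B. \<forall>a\<in>A. \<forall>b\<in>B. \<kappa> a \<noteq> \<kappa> b) Pt"
    unfolding Pl(3) .
  have G2: "satisfies_edges ?G2 \<kappa> \<longleftrightarrow>
      (\<forall>B\<in>Pt. \<forall>a\<in>B. \<forall>b\<in>B. \<kappa> a = \<kappa> b) \<and> pairwise (\<lambda>A B. \<forall>a\<in>A. \<forall>b\<in>B. \<kappa> a \<noteq> \<kappa> b) Pt"
    using Pl_disjnt Pl_distinct_colours cycles[of Pt] Pl(3)
    by (simp add: satisfies_edges_gsum_list sorted_wrt_map)
  have disj: "disjnt (fst ?G1) (fst ?G2)"
    unfolding V1 V2 by (rule rsc_Union_disjnt[OF P])
  show "satisfies_edges (Fbar_graph (Ph, Pt)) \<kappa> \<longleftrightarrow> admissible_colouring (Ph, Pt) \<kappa>"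
    unfolding graph satisfies_edges_gsum[OF disj] G1 G2 V1 V2 admissible_colouring.simps ball_Un colour_rel.simps
    by argo
qed

lemma Fbar_eq:
  assumes "PP \<in> rsc r n"
  shows "Fbar PP w =
    (if length w = n \<and> 0 \<notin> set w \<and> admissible_colouring PP (letter w) then 1 else 0)"
  using assms Ypoly_eq[OF fst_Fbar_graph] satisfies_edges_Fbar_graph
  by (cases PP) (simp add: Fbar_def)

section \<open>The type of a word\<close>

fun has_type :: "nat \<Rightarrow> nat list \<Rightarrow> nat set list \<times> nat set set \<Rightarrow> bool" where
  "has_type n w (Ph, Pt) \<longleftrightarrow> length w = n \<and> 0 \<notin> set w \<and>
     (\<forall>j\<in>{1..n}. \<forall>k\<in>{1..n}. letter w j = letter w k \<longleftrightarrow> same_block Ph Pt j k) \<and>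
     sorted_wrt (\<lambda>A B. \<forall>a\<in>A. \<forall>b\<in>B. letter w a < letter w b) Ph"

lemma Mmon_eq: "Mmon n PP w = (if has_type n w PP then 1 else 0)"
  by (cases PP) (simp add: Mmon_def sorted_wrt_pointwise_iff)

lemma has_type_length: "has_type n w PP \<Longrightarrow> length w = n \<and> 0 \<notin> set w"
  by (cases PP) simp

definition word_type :: "nat \<Rightarrow> nat list \<Rightarrow> nat set list \<times> nat set set" where
  "word_type r w =
     (map (level w) (filter (\<lambda>v. r \<le> card (level w v)) (sorted_list_of_set (set w))),
      {B \<in> level w ` set w. card B < r})"

lemma set_fst_word_type: "set (fst (word_type r w)) = {B \<in> level w ` set w. r \<le> card B}"
  by (auto simp: word_type_def)

lemma blocks_word_type: "blocks (word_type r w) = level w ` set w"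
proof -
  have "blocks (word_type r w) = set (fst (word_type r w)) \<union> snd (word_type r w)"
    by (cases "word_type r w") simp
  then show ?thesis
    unfolding set_fst_word_type by (auto simp: word_type_def)
qed

lemma word_type_rsc: "word_type r w \<in> rsc r (length w)"
proof -
  define vs where "vs = filter (\<lambda>v. r \<le> card (level w v)) (sorted_list_of_set (set w))"
  define Ph where "Ph = map (level w) vs"
  define Pt where "Pt = {B \<in> level w ` set w. card B < r}"
  have wt: "word_type r w = (Ph, Pt)"
    by (simp add: word_type_def vs_def Ph_def Pt_def)
  have Ph: "set Ph = {B \<in> level w ` set w. r \<le> card B}"
    using set_fst_word_type[of r w] by (simp add: wt)
  have "distinct Ph"
    unfolding Ph_def vs_def
    by (rule distinct_map_filter) (simp add: distinct_map inj_on_level)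
  have "set_composition (\<Union>(set Ph)) Ph"
    unfolding set_composition_def
  proof (intro conjI ballI allI impI refl)
    show "B \<noteq> {}" if "B \<in> set Ph" for B
      using that Ph partition_onD3[OF partition_levels[of w]] by blast
    show "Ph ! i \<inter> Ph ! j = {}" if "i < length Ph" "j < length Ph" "i \<noteq> j" for i j
    proof -
      have "Ph ! i \<noteq> Ph ! j"
        using \<open>distinct Ph\<close> that by (simp add: nth_eq_iff_index_eq)
      moreover have "Ph ! i \<in> level w ` set w" "Ph ! j \<in> level w ` set w"
        using that Ph nth_mem by blast+
      ultimately show ?thesis
        by (rule disjointD[OF partition_onD2[OF partition_levels[of w]], rotated 2])
    qed
  qed
  moreover have "partition_on ({1..length w} - \<Union>(set Ph)) Pt"
    using partition_on_filter[OF partition_levels, of w "\<lambda>B. r \<le> card B"]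
    by (simp add: Ph Pt_def not_le)
  moreover have "\<Union>(set Ph) \<subseteq> {1..length w}"
    using Ph partition_onD1[OF partition_levels] by blast
  ultimately show ?thesis
    unfolding wt rsc_def r_set_composition_def using Ph by (auto simp: Pt_def)
qed

lemma has_type_word_type:
  assumes "0 \<notin> set w"
  shows "has_type (length w) w (word_type r w)"
proof -
  obtain Ph Pt where wt: "word_type r w = (Ph, Pt)"
    by fastforce
  have "set Ph \<union> Pt = level w ` set w"
    using blocks_word_type[of r w] by (simp add: wt)
  then have same: "letter w j = letter w k \<longleftrightarrow> same_block Ph Pt j k"
    if "j \<in> {1..length w}" "k \<in> {1..length w}" for j k
    using same_level_iff[OF that] by (simp add: same_block_def)
  have "sorted_wrt (<) (filter (\<lambda>v. r \<le> card (level w v)) (sorted_list_of_set (set w)))"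
    by (simp add: sorted_wrt_filter strict_sorted_list_of_set)
  then have "sorted_wrt (\<lambda>A B. \<forall>a\<in>A. \<forall>b\<in>B. letter w a < letter w b) Ph"
    using wt unfolding word_type_def
    by (auto simp: sorted_wrt_map level_def elim!: sorted_wrt_mono_rel[rotated])
  then show ?thesis
    using assms same by (simp add: wt)
qed

lemma has_type_block_eq_level:
  assumes P: "(Ph, Pt) \<in> rsc r n" and w: "has_type n w (Ph, Pt)"
    and B: "B \<in> set Ph \<union> Pt" and "j \<in> B"
  shows "B = level w (letter w j)"
proof -
  have len: "length w = n"
    and same: "\<And>j k. j \<in> {1..n} \<Longrightarrow> k \<in> {1..n} \<Longrightarrow> letter w j = letter w k \<longleftrightarrow> same_block Ph Pt j k"
    using w by auto
  have sub: "B \<subseteq> {1..n}"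
    by (rule rsc_block_subset[OF P B])
  show ?thesis
  proof (intro equalityI subsetI)
    fix k assume "k \<in> B"
    then have "same_block Ph Pt k j"
      using B \<open>j \<in> B\<close> by (auto simp: same_block_def)
    moreover have "k \<in> {1..n}" "j \<in> {1..n}"
      using sub \<open>k \<in> B\<close> \<open>j \<in> B\<close> by auto
    ultimately have "letter w k = letter w j"
      using same[of k j] by simp
    then show "k \<in> level w (letter w j)"
      using \<open>k \<in> {1..n}\<close> len by (simp add: level_def)
  next
    fix k assume "k \<in> level w (letter w j)"
    then have "k \<in> {1..n}" "letter w k = letter w j"
      using len by (auto simp: level_def)
    moreover have "j \<in> {1..n}"
      using sub \<open>j \<in> B\<close> by auto
    ultimately have "same_block Ph Pt k j"
      using same[of k j] by simp
    then obtain B' where "B' \<in> set Ph \<union> Pt" "k \<in> B'" "j \<in> B'"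
      unfolding same_block_def by blast
    then show "k \<in> B"
      using partition_on_part_eq[OF rsc_partition[OF P] B _ \<open>j \<in> B\<close>] by blast
  qed
qed

lemma blocks_has_type:
  assumes P: "(Ph, Pt) \<in> rsc r n" and w: "has_type n w (Ph, Pt)"
  shows "set Ph \<union> Pt = level w ` set w"
proof
  have len: "length w = n"
    using w by simp
  show "set Ph \<union> Pt \<subseteq> level w ` set w"
  proof
    fix B assume B: "B \<in> set Ph \<union> Pt"
    then obtain j where "j \<in> B"
      using rsc_block_nonempty[OF P] by blast
    moreover have "j \<in> {1..length w}"
      using rsc_block_subset[OF P B] \<open>j \<in> B\<close> len by auto
    ultimately show "B \<in> level w ` set w"
      using has_type_block_eq_level[OF P w B] letter_in_set by blast
  qed
  show "level w ` set w \<subseteq> set Ph \<union> Pt"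
  proof
    fix B assume "B \<in> level w ` set w"
    then obtain j where j: "j \<in> {1..n}" "B = level w (letter w j)"
      using len in_set_conv_letter by auto
    then obtain B' where "B' \<in> set Ph \<union> Pt" "j \<in> B'"
      using partition_onD1[OF rsc_partition[OF P]] by blast
    then show "B \<in> set Ph \<union> Pt"
      using has_type_block_eq_level[OF P w] j by metis
  qed
qed

lemma has_type_sorted_min_letters:
  assumes P: "(Ph, Pt) \<in> rsc r n" and w: "has_type n w (Ph, Pt)"
  shows "sorted_wrt (\<lambda>A B. letter w (Min A) < letter w (Min B)) Ph"
proof -
  have "Min B \<in> B" if "B \<in> set Ph" for B
    using rsc_block_finite[OF P] rsc_block_nonempty[OF P] that by simp
  then show ?thesis
    using w by (auto elim!: sorted_wrt_mono_rel[rotated])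
qed

lemma has_type_imp_eq_word_type:
  assumes P: "PP \<in> rsc r n" and w: "has_type n w PP"
  shows "PP = word_type r w"
proof -
  obtain Ph Pt where PP: "PP = (Ph, Pt)"
    by fastforce
  obtain Ph' Pt' where wt: "word_type r w = (Ph', Pt')"
    by fastforce
  have "length w = n" "0 \<notin> set w"
    using w PP by auto
  then have P': "(Ph', Pt') \<in> rsc r n" and w': "has_type n w (Ph', Pt')"
    using word_type_rsc[of r w] has_type_word_type[of w r] wt by auto
  have same_blocks: "set Ph \<union> Pt = set Ph' \<union> Pt'"
    using blocks_has_type[OF P[unfolded PP] w[unfolded PP]] blocks_has_type[OF P' w'] by simp
  have "Pt = {B \<in> set Ph \<union> Pt. card B < r}"
    by (rule rsc_blocks_split(2)[OF P[unfolded PP]])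
  also have "\<dots> = {B \<in> set Ph' \<union> Pt'. card B < r}"
    unfolding same_blocks ..
  also have "\<dots> = Pt'"
    by (rule rsc_blocks_split(2)[OF P', symmetric])
  finally have "Pt = Pt'" .
  have "set Ph = {B \<in> set Ph \<union> Pt. r \<le> card B}"
    by (rule rsc_blocks_split(1)[OF P[unfolded PP]])
  also have "\<dots> = {B \<in> set Ph' \<union> Pt'. r \<le> card B}"
    unfolding same_blocks ..
  also have "\<dots> = set Ph'"
    by (rule rsc_blocks_split(1)[OF P', symmetric])
  finally have "set Ph = set Ph'" .
  have "Ph = Ph'"
    using has_type_sorted_min_letters[OF P[unfolded PP] w[unfolded PP]]
      has_type_sorted_min_letters[OF P' w'] \<open>set Ph = set Ph'\<close>
    by (rule sorted_wrt_key_unique)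
  with \<open>Pt = Pt'\<close> show ?thesis
    by (simp add: PP wt)
qed

lemma has_type_witness:
  assumes P: "(Ph, Pt) \<in> rsc r n"
  shows "\<exists>w. has_type n w (Ph, Pt)"
proof -
  have "finite (set Ph \<union> Pt)"
    using finite_elements[OF _ rsc_partition[OF P]] by simp
  then obtain Pl where Pl: "distinct Pl" "set Pl = Pt"
    using finite_distinct_list[of Pt] by auto
  define Bs where "Bs = Ph @ Pl"
  have Bs: "distinct Bs" "set Bs = set Ph \<union> Pt"
    using rsc_distinct[OF P] rsc_disjoint_parts[OF P] Pl by (auto simp: Bs_def)
  have disj: "disjoint (set Bs)"
    using partition_onD2[OF rsc_partition[OF P]] by (simp add: Bs(2))
  define w where "w = map (\<lambda>j. Suc (LEAST i. j \<in> Bs ! i)) [1..<Suc n]"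
  have letters: "\<forall>j\<in>{1..n}. Suc (LEAST i. j \<in> Bs ! i) = letter w j"
    using eq_map_upt_iff[THEN iffD1, OF w_def] by blast
  have cover: "\<exists>i<length Bs. j \<in> Bs ! i" if "j \<in> {1..n}" for j
  proof -
    have "\<Union>(set Bs) = {1..n}"
      using partition_onD1[OF rsc_partition[OF P]] unfolding Bs(2) by (rule sym)
    then have "j \<in> \<Union>(set Bs)"
      using that by simp
    then obtain B where "B \<in> set Bs" "j \<in> B"
      by blast
    then show ?thesis
      by (metis in_set_conv_nth)
  qed
  have letter: "letter w j = Suc i" if "i < length Bs" "j \<in> Bs ! i" for i j
  proof -
    have "Bs ! i \<in> set Ph \<union> Pt"
      using that(1) Bs(2) nth_mem by metis
    then have "j \<in> {1..n}"
      using rsc_block_subset[OF P] that(2) by blast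
    then have "letter w j = Suc (LEAST i. j \<in> Bs ! i)"
      using letters by simp
    then show ?thesis
      using Least_index_eq[OF Bs(1) disj that] by simp
  qed
  have same: "letter w j = letter w k \<longleftrightarrow> same_block Ph Pt j k"
    if jk: "j \<in> {1..n}" "k \<in> {1..n}" for j k
  proof
    obtain i i' where i: "i < length Bs" "j \<in> Bs ! i" and i': "i' < length Bs" "k \<in> Bs ! i'"
      using cover[OF jk(1)] cover[OF jk(2)] by blast
    assume "letter w j = letter w k"
    then have "i = i'"
      using letter[OF i] letter[OF i'] by simp
    then have "Bs ! i \<in> set Ph \<union> Pt" "j \<in> Bs ! i" "k \<in> Bs ! i"
      using i i' Bs(2) nth_mem by auto
    then show "same_block Ph Pt j k"
      unfolding same_block_def by blast
  next
    assume "same_block Ph Pt j k"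
    then obtain B where "B \<in> set Bs" "j \<in> B" "k \<in> B"
      unfolding same_block_def Bs(2) by blast
    then obtain m where "m < length Bs" "j \<in> Bs ! m" "k \<in> Bs ! m"
      by (metis in_set_conv_nth)
    then show "letter w j = letter w k"
      using letter by simp
  qed
  have sorted: "sorted_wrt (\<lambda>A B. \<forall>a\<in>A. \<forall>b\<in>B. letter w a < letter w b) Ph"
    unfolding sorted_wrt_pointwise_iff
  proof (intro allI impI)
    fix l m a b assume lm: "l < m \<and> m < length Ph \<and> a \<in> Ph ! l \<and> b \<in> Ph ! m"
    then have "Bs ! l = Ph ! l" "Bs ! m = Ph ! m" "m < length Bs"
      by (simp_all add: Bs_def nth_append)
    then have "letter w a = Suc l" and "letter w b = Suc m"
      using letter[of l a] letter[of m b] lm by simp_all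
    then show "letter w a < letter w b"
      using lm by simp
  qed
  have "has_type n w (Ph, Pt)"
    unfolding has_type.simps
  proof (intro conjI ballI)
    show "length w = n" and "0 \<notin> set w"
      by (auto simp: w_def)
    fix j k assume "j \<in> {1..n}" "k \<in> {1..n}"
    then show "letter w j = letter w k \<longleftrightarrow> same_block Ph Pt j k"
      by (rule same)
  qed (rule sorted)
  then show ?thesis
    by blast
qed

definition type_witness :: "nat \<Rightarrow> nat set list \<times> nat set set \<Rightarrow> nat list" where
  "type_witness n PP = (SOME w. has_type n w PP)"

lemma has_type_type_witness:
  assumes "PP \<in> rsc r n"
  shows "has_type n (type_witness n PP) PP"
proof -
  obtain Ph Pt where PP: "PP = (Ph, Pt)"
    by fastforce
  show ?thesis
    using has_type_witness[OF assms[unfolded PP]] unfolding type_witness_def PP by (rule someI_ex)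
qed

lemma Mmon_type_witness:
  assumes P: "PP \<in> rsc r n" and Q: "QQ \<in> rsc r n"
  shows "Mmon n QQ (type_witness n PP) = (if QQ = PP then 1 else 0)"
proof -
  have "has_type n (type_witness n PP) QQ \<longleftrightarrow> QQ = PP"
    using has_type_type_witness[OF P] has_type_imp_eq_word_type[OF P] has_type_imp_eq_word_type[OF Q]
    by metis
  then show ?thesis
    by (simp add: Mmon_eq)
qed

section \<open>Fbar in the monomial basis\<close>

lemma has_type_letter_eq_iff:
  assumes P: "(Ph, Pt) \<in> rsc r n" and w: "has_type n w (Ph, Pt)"
    and B: "B \<in> set Ph \<union> Pt" and B': "B' \<in> set Ph \<union> Pt" and "a \<in> B" and "b \<in> B'"
  shows "letter w a = letter w b \<longleftrightarrow> B = B'"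
proof -
  have "a \<in> {1..n}" "b \<in> {1..n}"
    using rsc_block_subset[OF P] B B' \<open>a \<in> B\<close> \<open>b \<in> B'\<close> by blast+
  then have "letter w a = letter w b \<longleftrightarrow> same_block Ph Pt a b"
    using w by simp
  also have "\<dots> \<longleftrightarrow> B = B'"
    by (rule rsc_same_block_iff[OF P B B' \<open>a \<in> B\<close> \<open>b \<in> B'\<close>])
  finally show ?thesis .
qed

lemma has_type_letter_le_iff:
  assumes P: "(Ph, Pt) \<in> rsc r n" and w: "has_type n w (Ph, Pt)"
    and i: "i < length Ph" and j: "j < length Ph" and "a \<in> Ph ! i" and "b \<in> Ph ! j"
  shows "letter w a \<le> letter w b \<longleftrightarrow> i \<le> j"
proof -
  have strict: "letter w x < letter w y"
    if "l < m" "m < length Ph" "x \<in> Ph ! l" "y \<in> Ph ! m" for l m x y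
    using w that unfolding has_type.simps sorted_wrt_pointwise_iff by blast
  consider "i = j" | "i < j" | "j < i"
    by linarith
  then show ?thesis
  proof cases
    case 1
    have "Ph ! i \<in> set Ph \<union> Pt"
      using i by simp
    then have "letter w a = letter w b"
      using has_type_letter_eq_iff[OF P w] \<open>a \<in> Ph ! i\<close> \<open>b \<in> Ph ! j\<close> 1 by blast
    then show ?thesis
      using 1 by simp
  next
    case 2
    then show ?thesis
      using strict[of i j a b] j \<open>a \<in> Ph ! i\<close> \<open>b \<in> Ph ! j\<close> by simp
  next
    case 3
    then show ?thesis
      using strict[of j i b a] i \<open>a \<in> Ph ! i\<close> \<open>b \<in> Ph ! j\<close> by simp
  qed
qed

lemma admissible_colouring_if_has_type:
  assumes P: "PP \<in> rsc r n" and w: "has_type n w PP"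
  shows "admissible_colouring PP (letter w)"
proof -
  obtain Ph Pt where PP: "PP = (Ph, Pt)"
    by fastforce
  note eq_iff = has_type_letter_eq_iff[OF P[unfolded PP] w[unfolded PP]]
  have "sorted_wrt (\<lambda>A B. \<forall>a\<in>A. \<forall>b\<in>B. letter w a < letter w b) Ph"
    using w PP by simp
  then have sorted: "sorted_wrt (\<lambda>A B. \<forall>a\<in>A. \<forall>b\<in>B. letter w a \<le> letter w b) Ph"
    by (rule sorted_wrt_mono_rel[rotated]) (meson less_imp_le)
  have distinct: "pairwise (\<lambda>A B. \<forall>a\<in>A. \<forall>b\<in>B. letter w a \<noteq> letter w b) Pt"
  proof (rule pairwiseI, intro ballI)
    fix A B a b assume "A \<in> Pt" "B \<in> Pt" "A \<noteq> B" "a \<in> A" "b \<in> B"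
    then show "letter w a \<noteq> letter w b"
      using eq_iff[of A B a b] by simp
  qed
  have "admissible_colouring (Ph, Pt) (letter w)"
    unfolding admissible_colouring.simps
  proof (intro conjI ballI)
    fix B a b assume "B \<in> set Ph \<union> Pt" "a \<in> B" "b \<in> B"
    then show "letter w a = letter w b"
      using eq_iff[of B B a b] by simp
  next
    fix a b assume "a \<in> \<Union>(set Ph)" "b \<in> \<Union>Pt"
    then obtain A B where "A \<in> set Ph" "a \<in> A" "B \<in> Pt" "b \<in> B"
      by blast
    moreover have "A \<noteq> B"
      using rsc_disjoint_parts[OF P[unfolded PP]] calculation by blast
    ultimately show "letter w a \<noteq> letter w b"
      using eq_iff[of A B a b] by simp
  qed (rule sorted distinct)+
  then show ?thesis
    by (simp only: PP)
qed

lemma admissible_colouring_big_block: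
  assumes P: "(Ph, Pt) \<in> rsc r n" and Q: "(Qh, Qt) \<in> rsc r n"
    and w: "has_type n w (Ph, Pt)" and adm: "admissible_colouring (Qh, Qt) (letter w)"
    and B: "B \<in> set Qh"
  shows "\<exists>i<length Ph. B \<subseteq> Ph ! i"
proof -
  have BQ: "B \<in> set Qh \<union> Qt"
    using B by simp
  obtain a where "a \<in> B"
    using rsc_block_nonempty[OF Q BQ] by blast
  then have "a \<in> {1..n}"
    using rsc_block_subset[OF Q BQ] by blast
  then obtain D where D: "D \<in> set Ph \<union> Pt" "a \<in> D"
    using rsc_cover[OF P] by blast
  have "\<forall>B\<in>set Qh \<union> Qt. \<forall>a\<in>B. \<forall>b\<in>B. letter w a = letter w b"
    using adm unfolding admissible_colouring.simps by (elim conjE)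
  then have const: "\<forall>a\<in>B. \<forall>b\<in>B. letter w a = letter w b"
    using BQ by (rule bspec)
  have "B \<subseteq> D"
  proof
    fix x assume "x \<in> B"
    then have "x \<in> {1..n}" and "letter w x = letter w a"
      using rsc_block_subset[OF Q BQ] const \<open>a \<in> B\<close> by blast+
    moreover have "length w = n"
      using w by simp
    ultimately have "x \<in> level w (letter w a)"
      by (simp add: level_def)
    then show "x \<in> D"
      using has_type_block_eq_level[OF P w D] by simp
  qed
  have "r \<le> card B"
    by (rule rsc_card_ge[OF Q B])
  also have "\<dots> \<le> card D"
    using rsc_block_finite[OF P D(1)] \<open>B \<subseteq> D\<close> by (rule card_mono)
  finally have "D \<notin> Pt"
    using rsc_card_less[OF P] by fastforce
  then have "D \<in> set Ph"
    using D(1) by simp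
  then obtain i where "i < length Ph" "Ph ! i = D"
    by (meson in_set_conv_nth)
  then show ?thesis
    using \<open>B \<subseteq> D\<close> by blast
qed

lemma admissible_colouring_type_invariant:
  assumes P: "(Ph, Pt) \<in> rsc r n" and Q: "(Qh, Qt) \<in> rsc r n"
    and w: "has_type n w (Ph, Pt)" and w': "has_type n w' (Ph, Pt)"
    and adm: "admissible_colouring (Qh, Qt) (letter w)"
  shows "admissible_colouring (Qh, Qt) (letter w')"
proof -
  have pattern: "letter w a = letter w b \<longleftrightarrow> letter w' a = letter w' b"
    if "a \<in> \<Union>(set Qh \<union> Qt)" "b \<in> \<Union>(set Qh \<union> Qt)" for a b
  proof -
    have "a \<in> {1..n}" "b \<in> {1..n}"
      using that partition_onD1[OF rsc_partition[OF Q]] by blast+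
    then show ?thesis
      using w w' by simp
  qed
  have const: "\<forall>B\<in>set Qh \<union> Qt. \<forall>a\<in>B. \<forall>b\<in>B. letter w a = letter w b"
    and sorted: "sorted_wrt (\<lambda>A B. \<forall>a\<in>A. \<forall>b\<in>B. letter w a \<le> letter w b) Qh"
    and distinct: "pairwise (\<lambda>A B. \<forall>a\<in>A. \<forall>b\<in>B. letter w a \<noteq> letter w b) Qt"
    and cross: "\<forall>a\<in>\<Union>(set Qh). \<forall>b\<in>\<Union>Qt. letter w a \<noteq> letter w b"
    using adm unfolding admissible_colouring.simps by blast+
  have order: "letter w' a \<le> letter w' b"
    if "A \<in> set Qh" "B \<in> set Qh" "a \<in> A" "b \<in> B" "letter w a \<le> letter w b" for A B a b
  proof -
    obtain i where i: "i < length Ph" "A \<subseteq> Ph ! i"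
      using admissible_colouring_big_block[OF P Q w adm \<open>A \<in> set Qh\<close>] by blast
    obtain j where j: "j < length Ph" "B \<subseteq> Ph ! j"
      using admissible_colouring_big_block[OF P Q w adm \<open>B \<in> set Qh\<close>] by blast
    have "a \<in> Ph ! i" "b \<in> Ph ! j"
      using i j that by blast+
    then have "i \<le> j"
      using has_type_letter_le_iff[OF P w i(1) j(1)] that(5) by blast
    then show ?thesis
      using has_type_letter_le_iff[OF P w' i(1) j(1) \<open>a \<in> Ph ! i\<close> \<open>b \<in> Ph ! j\<close>] by blast
  qed
  show ?thesis
    unfolding admissible_colouring.simps
  proof (intro conjI ballI)
    fix B a b assume B: "B \<in> set Qh \<union> Qt" and "a \<in> B" "b \<in> B"
    then have "letter w a = letter w b"
      using const by blast
    moreover have "a \<in> \<Union>(set Qh \<union> Qt)" "b \<in> \<Union>(set Qh \<union> Qt)"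
      using B \<open>a \<in> B\<close> \<open>b \<in> B\<close> by blast+
    ultimately show "letter w' a = letter w' b"
      using pattern by blast
  next
    show "sorted_wrt (\<lambda>A B. \<forall>a\<in>A. \<forall>b\<in>B. letter w' a \<le> letter w' b) Qh"
      using sorted by (rule sorted_wrt_mono_rel[rotated]) (use order in blast)
  next
    show "pairwise (\<lambda>A B. \<forall>a\<in>A. \<forall>b\<in>B. letter w' a \<noteq> letter w' b) Qt"
    proof (rule pairwiseI, intro ballI)
      fix A B a b assume "A \<in> Qt" "B \<in> Qt" "A \<noteq> B" "a \<in> A" "b \<in> B"
      moreover from this have "letter w a \<noteq> letter w b"
        using distinct unfolding pairwise_def by blast
      ultimately show "letter w' a \<noteq> letter w' b"
        using pattern[of a b] by blast
    qed
  next
    fix a b assume "a \<in> \<Union>(set Qh)" "b \<in> \<Union>Qt"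
    moreover from this have "letter w a \<noteq> letter w b"
      using cross by blast
    ultimately show "letter w' a \<noteq> letter w' b"
      using pattern[of a b] by blast
  qed
qed

lemma Fbar_type_invariant:
  assumes P: "PP \<in> rsc r n" and Q: "QQ \<in> rsc r n"
    and w: "has_type n w PP" and w': "has_type n w' PP"
  shows "Fbar QQ w = Fbar QQ w'"
proof -
  obtain Ph Pt where PP: "PP = (Ph, Pt)"
    by fastforce
  obtain Qh Qt where QQ: "QQ = (Qh, Qt)"
    by fastforce
  note invariant = admissible_colouring_type_invariant[OF P[unfolded PP] Q[unfolded QQ]]
  have "admissible_colouring QQ (letter w) \<longleftrightarrow> admissible_colouring QQ (letter w')"
    using invariant[OF w[unfolded PP] w'[unfolded PP]] invariant[OF w'[unfolded PP] w[unfolded PP]]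
    unfolding QQ by blast
  moreover have "length w = n" "0 \<notin> set w" "length w' = n" "0 \<notin> set w'"
    using w w' by (simp_all add: PP)
  ultimately show ?thesis
    using Fbar_eq[OF Q, of w] Fbar_eq[OF Q, of w'] by simp
qed

lemma Fbar_eq_sum_Mmon:
  assumes Q: "QQ \<in> rsc r n"
  shows "Fbar QQ = (\<Sum>PP\<in>rsc r n. qscale (Fbar QQ (type_witness n PP)) (Mmon n PP))"
proof
  fix w
  have "(\<Sum>PP\<in>rsc r n. qscale (Fbar QQ (type_witness n PP)) (Mmon n PP)) w =
      (\<Sum>PP\<in>rsc r n. Fbar QQ (type_witness n PP) * Mmon n PP w)"
    by (simp add: sum_fun_apply qscale_def)
  also have "\<dots> = Fbar QQ w"
  proof (cases "length w = n \<and> 0 \<notin> set w")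
    case True
    define P0 where "P0 = word_type r w"
    have P0: "P0 \<in> rsc r n" and w: "has_type n w P0"
      using word_type_rsc[of r w] has_type_word_type[of w r] True by (simp_all add: P0_def)
    have "Fbar QQ (type_witness n PP) * Mmon n PP w =
        (if PP = P0 then Fbar QQ (type_witness n PP) else 0)" if "PP \<in> rsc r n" for PP
    proof -
      have "has_type n w PP \<longleftrightarrow> PP = P0"
        using has_type_imp_eq_word_type[OF that] w unfolding P0_def by metis
      then show ?thesis
        by (simp add: Mmon_eq)
    qed
    then have "(\<Sum>PP\<in>rsc r n. Fbar QQ (type_witness n PP) * Mmon n PP w) =
        (\<Sum>PP\<in>rsc r n. if PP = P0 then Fbar QQ (type_witness n PP) else 0)"
      by (rule sum.cong[OF refl])
    also have "\<dots> = Fbar QQ (type_witness n P0)"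
      using P0 rsc_finite by simp
    also have "\<dots> = Fbar QQ w"
      using Fbar_type_invariant[OF P0 Q has_type_type_witness[OF P0] w] .
    finally show ?thesis .
  next
    case False
    then have "Mmon n PP w = 0" for PP
      by (cases PP) (auto simp: Mmon_eq)
    moreover have "Fbar QQ w = 0"
      using False Fbar_eq[OF Q, of w] by auto
    ultimately show ?thesis
      by simp
  qed
  finally show "Fbar QQ w = (\<Sum>PP\<in>rsc r n. qscale (Fbar QQ (type_witness n PP)) (Mmon n PP)) w"
    by simp
qed

lemma card_blocks_has_type:
  assumes P: "PP \<in> rsc r n" and w: "has_type n w PP"
  shows "card (blocks PP) = card (set w)"
proof -
  obtain Ph Pt where PP: "PP = (Ph, Pt)"
    by fastforce
  have "blocks PP = level w ` set w"
    using blocks_has_type[OF P[unfolded PP] w[unfolded PP]] by (simp add: PP)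
  then show ?thesis
    using card_image[OF inj_on_level] by simp
qed

lemma admissible_colouring_letter_eq_Min:
  assumes Q: "(Qh, Qt) \<in> rsc r n" and adm: "admissible_colouring (Qh, Qt) (letter w)"
    and B: "B \<in> set Qh \<union> Qt" and "a \<in> B"
  shows "letter w a = letter w (Min B)"
proof -
  have "Min B \<in> B"
    using rsc_block_finite[OF Q B] rsc_block_nonempty[OF Q B] by simp
  moreover have "\<forall>B\<in>set Qh \<union> Qt. \<forall>a\<in>B. \<forall>b\<in>B. letter w a = letter w b"
    using adm unfolding admissible_colouring.simps by blast
  ultimately show ?thesis
    using B \<open>a \<in> B\<close> by blast
qed

lemma admissible_colouring_set_eq:
  assumes Q: "(Qh, Qt) \<in> rsc r n" and len: "length w = n"
    and adm: "admissible_colouring (Qh, Qt) (letter w)"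
  shows "set w = (\<lambda>B. letter w (Min B)) ` (set Qh \<union> Qt)"
proof
  show "set w \<subseteq> (\<lambda>B. letter w (Min B)) ` (set Qh \<union> Qt)"
  proof
    fix v assume "v \<in> set w"
    then obtain j where "j \<in> {1..n}" "letter w j = v"
      using in_set_conv_letter len by blast
    moreover obtain B where "B \<in> set Qh \<union> Qt" "j \<in> B"
      using rsc_cover[OF Q \<open>j \<in> {1..n}\<close>] by blast
    ultimately show "v \<in> (\<lambda>B. letter w (Min B)) ` (set Qh \<union> Qt)"
      using admissible_colouring_letter_eq_Min[OF Q adm] by blast
  qed
  show "(\<lambda>B. letter w (Min B)) ` (set Qh \<union> Qt) \<subseteq> set w"
  proof
    fix v assume "v \<in> (\<lambda>B. letter w (Min B)) ` (set Qh \<union> Qt)"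
    then obtain B where B: "B \<in> set Qh \<union> Qt" "v = letter w (Min B)"
      by blast
    then have "Min B \<in> {1..length w}"
      using rsc_block_finite[OF Q B(1)] rsc_block_nonempty[OF Q B(1)] rsc_block_subset[OF Q B(1)] len
      by (meson Min_in subsetD)
    then show "v \<in> set w"
      using B(2) letter_in_set by simp
  qed
qed

lemma card_set_le_card_blocks:
  assumes Q: "QQ \<in> rsc r n" and len: "length w = n" and adm: "admissible_colouring QQ (letter w)"
  shows "card (set w) \<le> card (blocks QQ)"
proof -
  obtain Qh Qt where QQ: "QQ = (Qh, Qt)"
    by fastforce
  have "finite (set Qh \<union> Qt)"
    using finite_elements[OF _ rsc_partition[OF Q[unfolded QQ]]] by simp
  then have "card ((\<lambda>B. letter w (Min B)) ` (set Qh \<union> Qt)) \<le> card (set Qh \<union> Qt)"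
    by (rule card_image_le)
  then show ?thesis
    using admissible_colouring_set_eq[OF Q[unfolded QQ] len adm[unfolded QQ]] by (simp add: QQ)
qed

lemma has_type_if_card_eq:
  assumes Q: "(Qh, Qt) \<in> rsc r n" and len: "length w = n" and "0 \<notin> set w"
    and adm: "admissible_colouring (Qh, Qt) (letter w)"
    and card: "card (set w) = card (set Qh \<union> Qt)"
  shows "has_type n w (Qh, Qt)"
proof -
  have "finite (set Qh \<union> Qt)"
    using finite_elements[OF _ rsc_partition[OF Q]] by simp
  moreover have "card ((\<lambda>B. letter w (Min B)) ` (set Qh \<union> Qt)) = card (set Qh \<union> Qt)"
    using card admissible_colouring_set_eq[OF Q len adm] by simp
  ultimately have inj: "inj_on (\<lambda>B. letter w (Min B)) (set Qh \<union> Qt)"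
    by (rule eq_card_imp_inj_on)
  have eq_iff: "letter w a = letter w b \<longleftrightarrow> B = B'"
    if "B \<in> set Qh \<union> Qt" "B' \<in> set Qh \<union> Qt" "a \<in> B" "b \<in> B'" for B B' a b
    using admissible_colouring_letter_eq_Min[OF Q adm] that inj_onD[OF inj] by metis
  have same: "letter w j = letter w k \<longleftrightarrow> same_block Qh Qt j k"
    if jk: "j \<in> {1..n}" "k \<in> {1..n}" for j k
  proof -
    obtain B B' where "B \<in> set Qh \<union> Qt" "j \<in> B" "B' \<in> set Qh \<union> Qt" "k \<in> B'"
      using rsc_cover[OF Q jk(1)] rsc_cover[OF Q jk(2)] by blast
    then show ?thesis
      using eq_iff rsc_same_block_iff[OF Q] by metis
  qed
  have "sorted_wrt (\<lambda>A B. \<forall>a\<in>A. \<forall>b\<in>B. letter w a \<le> letter w b) Qh"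
    using adm by simp
  then have "sorted_wrt (\<lambda>A B. \<forall>a\<in>A. \<forall>b\<in>B. letter w a < letter w b) Qh"
    unfolding sorted_wrt_pointwise_iff
  proof (intro allI impI)
    fix l m a b assume lm: "l < m \<and> m < length Qh \<and> a \<in> Qh ! l \<and> b \<in> Qh ! m"
    assume le: "\<forall>l m a b. l < m \<and> m < length Qh \<and> a \<in> Qh ! l \<and> b \<in> Qh ! m \<longrightarrow>
        letter w a \<le> letter w b"
    have "Qh ! l \<noteq> Qh ! m"
      using rsc_distinct[OF Q] lm by (simp add: nth_eq_iff_index_eq)
    then have "letter w a \<noteq> letter w b"
      using eq_iff[of "Qh ! l" "Qh ! m" a b] lm by simp
    moreover have "letter w a \<le> letter w b"
      using le lm by blast
    ultimately show "letter w a < letter w b"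
      by simp
  qed
  then show ?thesis
    using len \<open>0 \<notin> set w\<close> same by simp
qed

lemma card_blocks_less:
  assumes P: "PP \<in> rsc r n" and Q: "QQ \<in> rsc r n" and w: "has_type n w PP"
    and adm: "admissible_colouring QQ (letter w)" and "PP \<noteq> QQ"
  shows "card (blocks PP) < card (blocks QQ)"
proof -
  obtain Qh Qt where QQ: "QQ = (Qh, Qt)"
    by fastforce
  have len: "length w = n" and "0 \<notin> set w"
    using w by (cases PP; simp)+
  have "card (set w) \<noteq> card (blocks QQ)"
  proof
    assume "card (set w) = card (blocks QQ)"
    then have "has_type n w QQ"
      using has_type_if_card_eq[OF Q[unfolded QQ] len \<open>0 \<notin> set w\<close> adm[unfolded QQ]] by (simp add: QQ)
    then have "QQ = PP"
      using has_type_imp_eq_word_type[OF Q] has_type_imp_eq_word_type[OF P w] by simp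
    with \<open>PP \<noteq> QQ\<close> show False
      by simp
  qed
  then show ?thesis
    using card_blocks_has_type[OF P w] card_set_le_card_blocks[OF Q len adm] by simp
qed

theorem mainTheorem4:
  fixes r n :: nat
  assumes "r \<ge> 1"
  shows "basis_family (NCQSym r n) (rsc r n) (Mmon n)
       \<and> basis_family (NCQSym r n) (rsc r n) Fbar"
proof -
  let ?M = "Mmon n ` rsc r n" and ?F = "Fbar ` rsc r n" and ?w = "type_witness n"
  have M: "inj_on (Mmon n) (rsc r n)" "Q.independent ?M"
    by (rule independent_if_triangular[OF rsc_finite, where p = ?w and h = "\<lambda>_. 0"];
        simp add: Mmon_type_witness)+
  have Fbar_witness: "Fbar QQ (?w PP) \<noteq> 0 \<longleftrightarrow> admissible_colouring QQ (letter (?w PP))"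
    if "PP \<in> rsc r n" "QQ \<in> rsc r n" for PP QQ
    using has_type_length[OF has_type_type_witness[OF that(1)]] by (simp add: Fbar_eq[OF that(2)])
  have diag: "Fbar PP (?w PP) \<noteq> 0" if "PP \<in> rsc r n" for PP
    using admissible_colouring_if_has_type[OF that has_type_type_witness[OF that]]
    by (simp add: Fbar_witness[OF that that])
  have below: "card (blocks PP) < card (blocks QQ)"
    if "PP \<in> rsc r n" "QQ \<in> rsc r n" "Fbar QQ (?w PP) \<noteq> 0" "QQ \<noteq> PP" for PP QQ
    using card_blocks_less[OF that(1,2) has_type_type_witness[OF that(1)]] that(3,4)
    by (simp add: Fbar_witness[OF that(1,2)])
  note F = independent_if_triangular[where v = Fbar and p = ?w and h = "\<lambda>PP. card (blocks PP)",
      OF rsc_finite[of r n] diag below]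
  have "Fbar QQ \<in> Q.span ?M" if "QQ \<in> rsc r n" for QQ
    by (subst Fbar_eq_sum_Mmon[OF that]) (intro Q.span_sum Q.span_scale Q.span_base imageI)
  then have "?F \<subseteq> Q.span ?M"
    by blast
  moreover have "card ?M \<le> card ?F"
    using card_image[OF M(1)] card_image[OF F(1)] by simp
  ultimately have "Q.span ?F = NCQSym r n"
    unfolding NCQSym_def using finite_imageI[OF rsc_finite[of r n]] F(2)
    by (intro Q.span_eq_if_card_le)
  then show ?thesis
    using M F unfolding basis_family_def NCQSym_def by simp
qed

end
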